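(* Under the standing assumptions, there are $\lambda_0>0$ and $C>0$ such that for all $0<\lambda<\lambda_0$, all $z\in\mathbb{C}$ with $\operatorname{Re}z\le\frac c2$, all $v\in L^2$ and all $u\in H^m(\mathbb{R})$ with $(\mathcal{A}^\lambda-z)u=v$, $$\|u\|_{H^{m/2}}\le C\big(\|u\|_{L^2_e}+\|v\|_{L^2}\big).$$
   Context: Standing assumptions: $f:\mathbb{R}\to\mathbb{R}$ is $C^1$ with $f(0)=f'(0)=0$. $\mathcal{M}$ is the Fourier multiplier with symbol $\alpha:\mathbb{R}\to[0,\infty)$, locally bounded, $a|k|^m\le\alpha(k)\le b|k|^m$ for all large $|k|$ ($m\ge1$, $a,b>0$). For $c>0$, $u_c\in H^m(\mathbb{R})$ is a real solution of $\mathcal{M}u_c+cu_c-f(u_c)=0$ with $u_c(x)\to0$ as $|x|\to\infty$. For $\lambda>0$, $\mathcal{A}^\lambda u=cu+\frac{c\partial_x}{\lambda-c\partial_x}\big(f'(u_c)u-\mathcal{M}u\big)$, where $\frac{c\partial_x}{\lambda-c\partial_x}$ is the Fourier multiplier with symbol $\frac{ick}{\lambda-ick}$. Weighted norm: $e(x)=(f'(u_c(x)))^2$, $\|u\|_{L^2_e}=(\int e|u|^2dx)^{1/2}$. *)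

theory Defs
  imports "HOL-Analysis.Analysis"
begin

definition L2 :: "(real \<Rightarrow> complex) set" where
  "L2 = {u. u \<in> borel_measurable lborel \<and>
            (\<integral>\<^sup>+ x. ennreal ((cmod (u x))\<^sup>2) \<partial>lborel) < \<infinity>}"

definition L2norm :: "(real \<Rightarrow> complex) \<Rightarrow> real" where
  "L2norm u = sqrt (enn2real (\<integral>\<^sup>+ x. ennreal ((cmod (u x))\<^sup>2) \<partial>lborel))"

text \<open>Weighted L2 norm with weight w (here w = (f' o u_c)^2).\<close>
definition L2wnorm :: "(real \<Rightarrow> real) \<Rightarrow> (real \<Rightarrow> complex) \<Rightarrow> real" where
  "L2wnorm w u = sqrt (enn2real (\<integral>\<^sup>+ x. ennreal (w x * (cmod (u x))\<^sup>2) \<partial>lborel))"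

definition fourier_trunc :: "(real \<Rightarrow> complex) \<Rightarrow> nat \<Rightarrow> real \<Rightarrow> complex" where
  "fourier_trunc u n k =
     (LINT x|lborel. indicator {- real n..real n} x *\<^sub>R (exp (- (\<i> * complex_of_real (k * x))) * u x))
       / complex_of_real (sqrt (2 * pi))"

definition has_fourier_L2 :: "(real \<Rightarrow> complex) \<Rightarrow> (real \<Rightarrow> complex) \<Rightarrow> bool" where
  "has_fourier_L2 u U \<longleftrightarrow> u \<in> L2 \<and> U \<in> L2 \<and>
     (\<lambda>n. \<integral>\<^sup>+ k. ennreal ((cmod (U k - fourier_trunc u n k))\<^sup>2) \<partial>lborel) \<longlonglongrightarrow> 0"

definition fourier_L2 :: "(real \<Rightarrow> complex) \<Rightarrow> real \<Rightarrow> complex" where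
  "fourier_L2 u = (SOME U. has_fourier_L2 u U)"

definition Hs :: "real \<Rightarrow> (real \<Rightarrow> complex) set" where
  "Hs s = {u. \<exists>U. has_fourier_L2 u U \<and>
               (\<integral>\<^sup>+ k. ennreal ((1 + k\<^sup>2) powr s * (cmod (U k))\<^sup>2) \<partial>lborel) < \<infinity>}"

definition Hnorm :: "real \<Rightarrow> (real \<Rightarrow> complex) \<Rightarrow> real" where
  "Hnorm s u = sqrt (enn2real
     (\<integral>\<^sup>+ k. ennreal ((1 + k\<^sup>2) powr s * (cmod (fourier_L2 u k))\<^sup>2) \<partial>lborel))"

definition multiplier_image :: "(real \<Rightarrow> complex) \<Rightarrow> (real \<Rightarrow> complex) \<Rightarrow> (real \<Rightarrow> complex) \<Rightarrow> bool" where
  "multiplier_image \<sigma> u w \<longleftrightarrow> (\<exists>U W. has_fourier_L2 u U \<and> has_fourier_L2 w W \<and>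
      (AE k in lborel. W k = \<sigma> k * U k))"

text \<open>Symbol of c d/dx (\<lambda> - c d/dx)^{-1}: i c k / (\<lambda> - i c k).\<close>
definition sym_T :: "real \<Rightarrow> real \<Rightarrow> real \<Rightarrow> complex" where
  "sym_T c lam k = (\<i> * complex_of_real (c * k)) / (complex_of_real lam - \<i> * complex_of_real (c * k))"

text \<open>(A^\<lambda> - z) u = v, with M the multiplier with symbol \<alpha>, written through M u and
  T(f'(u_c) u - M u) as L2 functions, identity holding almost everywhere.\<close>
definition A_eq :: "(real \<Rightarrow> real) \<Rightarrow> (real \<Rightarrow> real) \<Rightarrow> (real \<Rightarrow> real) \<Rightarrow> real \<Rightarrow> real
                    \<Rightarrow> complex \<Rightarrow> (real \<Rightarrow> complex) \<Rightarrow> (real \<Rightarrow> complex) \<Rightarrow> bool" where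
  "A_eq \<alpha> f' uc c lam z u v \<longleftrightarrow>
     (\<exists>Mu Tw. multiplier_image (\<lambda>k. complex_of_real (\<alpha> k)) u Mu \<and>
        multiplier_image (sym_T c lam) (\<lambda>x. complex_of_real (f' (uc x)) * u x - Mu x) Tw \<and>
        (AE x in lborel. complex_of_real c * u x + Tw x - z * u x = v x))"

end

theory Submission
  imports Defs "HOL-Probability.Probability"
begin

(* On the Fourier side the equation (A^lam - z) u = v reads
       (c - z - T(k) alpha(k)) U(k) = V(k) - T(k) P(k),
   where T is the symbol i c k / (lam - i c k) and P is the transform of p = f'(u_c) u
   (p is in L2 because p = (p - M u) + M u).  Since Re T \<le> 0 and |T| \<le> 1, for Re z \<le> c/2
   the symbol s = c - z - T alpha has Re s \<ge> c/2 + alpha |Re T|; for |k| large and lam < 1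
   this is at least alpha/2 \<ge> a |k|^m / 2.  Hence (1 + k^2)^(m/2) \<le> K |s|^2 uniformly in
   0 < lam < 1, and integrating |s U|^2 \<le> 2 |V|^2 + 2 |P|^2 against the weight gives
       ||u||_{H^(m/2)}^2 \<le> 4 K (||v||^2 + ||f'(u_c) u||^2)
   by the L2 bound ||F w||^2 \<le> 2 ||w||^2 of the Fourier transform of Defs.  So lam0 = 1 works. *)

section \<open>L2 bookkeeping\<close>

abbreviation energy :: "(real \<Rightarrow> complex) \<Rightarrow> ennreal" where
  "energy u \<equiv> \<integral>\<^sup>+x. ennreal ((cmod (u x))\<^sup>2) \<partial>lborel"

lemma L2_meas: "u \<in> L2 \<Longrightarrow> u \<in> borel_measurable borel"
  unfolding L2_def by auto

lemma L2_fin: "u \<in> L2 \<Longrightarrow> energy u < \<infinity>"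
  unfolding L2_def by auto

lemma L2I: "u \<in> borel_measurable lborel \<Longrightarrow> energy u < \<infinity> \<Longrightarrow> u \<in> L2"
  unfolding L2_def by auto

lemma L2_sq_integrable: "u \<in> L2 \<Longrightarrow> integrable lborel (\<lambda>x. (cmod (u x))\<^sup>2)"
  using L2_fin L2_meas by (intro integrableI_nonneg) auto

lemma sq_norm_add_le: "(cmod (a + b))\<^sup>2 \<le> 2 * (cmod a)\<^sup>2 + 2 * (cmod b)\<^sup>2"
proof -
  have "(cmod (a + b))\<^sup>2 \<le> (cmod a + cmod b)\<^sup>2"
    by (intro power_mono norm_triangle_ineq) simp
  also have "\<dots> \<le> 2 * (cmod a)\<^sup>2 + 2 * (cmod b)\<^sup>2"
    using sum_squares_bound[of "cmod a" "cmod b"] by (simp add: power2_sum)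
  finally show ?thesis .
qed

lemma sq_norm_add_le_ennreal:
  "ennreal ((cmod (a + b))\<^sup>2) \<le> 2 * ennreal ((cmod a)\<^sup>2) + 2 * ennreal ((cmod b)\<^sup>2)"
proof -
  have "ennreal ((cmod (a + b))\<^sup>2) \<le> ennreal (2 * (cmod a)\<^sup>2 + 2 * (cmod b)\<^sup>2)"
    using sq_norm_add_le ennreal_leI by blast
  then show ?thesis by (simp add: ennreal_plus ennreal_mult)
qed

lemma L2_lin:
  assumes "u \<in> L2" "w \<in> L2"
  shows "(\<lambda>x. a * u x + b * w x) \<in> L2"
proof (rule L2I)
  have [measurable]: "u \<in> borel_measurable borel" "w \<in> borel_measurable borel" using assms L2_meas by auto
  show "(\<lambda>x. a * u x + b * w x) \<in> borel_measurable lborel" by measurable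
  have "energy (\<lambda>x. a * u x + b * w x)
     \<le> (\<integral>\<^sup>+x. 2 * ennreal ((cmod a)\<^sup>2) * ennreal ((cmod (u x))\<^sup>2) + 2 * ennreal ((cmod b)\<^sup>2) * ennreal ((cmod (w x))\<^sup>2) \<partial>lborel)"
    by (intro nn_integral_mono order_trans[OF sq_norm_add_le_ennreal])
       (simp add: norm_mult power_mult_distrib ennreal_mult mult.assoc)
  also have "\<dots> = 2 * ennreal ((cmod a)\<^sup>2) * energy u + 2 * ennreal ((cmod b)\<^sup>2) * energy w"
    by (subst nn_integral_add, measurable, subst nn_integral_cmult, measurable, subst nn_integral_cmult, measurable)
  also have "\<dots> < \<infinity>"
    using L2_fin[OF assms(1)] L2_fin[OF assms(2)] by (simp add: ennreal_mult_less_top)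
  finally show "energy (\<lambda>x. a * u x + b * w x) < \<infinity>" .
qed

lemma L2wnorm_square_weight: "L2wnorm (\<lambda>x. (g x)\<^sup>2) u = L2norm (\<lambda>x. complex_of_real (g x) * u x)"
  unfolding L2wnorm_def L2norm_def by (simp add: norm_mult power_mult_distrib)

section \<open>The Plancherel inequality for integrable functions\<close>

lemma kernel_row_bound:
  fixes M :: "'a measure" and G :: "'a \<Rightarrow> 'a \<Rightarrow> real" and f :: "'a \<Rightarrow> real" and C :: ennreal
  assumes sf: "sigma_finite_measure M"
    and G_meas[measurable]: "(\<lambda>(x, y). G x y) \<in> borel_measurable (M \<Otimes>\<^sub>M M)"
    and f_meas[measurable]: "f \<in> borel_measurable M"
    and f_nonneg: "\<And>x. 0 \<le> f x" and rows: "\<And>x. (\<integral>\<^sup>+y. G x y \<partial>M) \<le> C"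
  shows "(\<integral>\<^sup>+x. \<integral>\<^sup>+y. ennreal (f x * G x y) \<partial>M \<partial>M) \<le> C * (\<integral>\<^sup>+x. f x \<partial>M)"
proof -
  interpret pair_sigma_finite M M using sf by (simp add: pair_sigma_finite_def)
  have "(\<integral>\<^sup>+x. \<integral>\<^sup>+y. ennreal (f x * G x y) \<partial>M \<partial>M) = (\<integral>\<^sup>+x. ennreal (f x) * (\<integral>\<^sup>+y. G x y \<partial>M) \<partial>M)"
  proof (rule nn_integral_cong)
    fix x assume "x \<in> space M"
    then show "(\<integral>\<^sup>+y. ennreal (f x * G x y) \<partial>M) = ennreal (f x) * (\<integral>\<^sup>+y. G x y \<partial>M)"
      using f_nonneg by (subst nn_integral_cmult[symmetric]) (measurable, simp add: ennreal_mult')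
  qed
  also have "\<dots> \<le> (\<integral>\<^sup>+x. ennreal (f x) * C \<partial>M)"
    by (intro nn_integral_mono mult_left_mono rows) simp
  also have "\<dots> = C * (\<integral>\<^sup>+x. f x \<partial>M)"
    by (subst nn_integral_multc, measurable) (simp add: mult.commute)
  finally show ?thesis .
qed

text \<open>Proof: g x g y \<le> (g x^2 + g y^2)/2, then the row
  bound for the first half and, after Fubini, for the second.\<close>
lemma schur_test:
  fixes M :: "'a measure" and G :: "'a \<Rightarrow> 'a \<Rightarrow> real" and g :: "'a \<Rightarrow> real" and C :: ennreal
  assumes sf: "sigma_finite_measure M"
    and G_meas[measurable]: "(\<lambda>(x, y). G x y) \<in> borel_measurable (M \<Otimes>\<^sub>M M)"
    and g_meas[measurable]: "g \<in> borel_measurable M"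
    and G_nonneg: "\<And>x y. 0 \<le> G x y"
    and rows: "\<And>x. (\<integral>\<^sup>+y. G x y \<partial>M) \<le> C" and cols: "\<And>y. (\<integral>\<^sup>+x. G x y \<partial>M) \<le> C"
  shows "(\<integral>\<^sup>+x. \<integral>\<^sup>+y. ennreal (g x * g y * G x y) \<partial>M \<partial>M) \<le> C * (\<integral>\<^sup>+x. ennreal ((g x)\<^sup>2) \<partial>M)"
proof -
  interpret pair_sigma_finite M M using sf by (simp add: pair_sigma_finite_def)
  define h where "h x = (g x)\<^sup>2 / 2" for x
  have [measurable]: "h \<in> borel_measurable M" unfolding h_def by measurable
  have h_nonneg: "\<And>x. 0 \<le> h x" unfolding h_def by simp
  have amgm: "ennreal (g x * g y * G x y) \<le> ennreal (h x * G x y) + ennreal (h y * G x y)" for x y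
  proof -
    have "g x * g y \<le> h x + h y"
      using sum_squares_bound[of "g x" "g y"] unfolding h_def by simp
    then have "g x * g y * G x y \<le> h x * G x y + h y * G x y"
      using mult_right_mono[OF _ G_nonneg[of x y]] by (metis distrib_right)
    then show ?thesis
      using G_nonneg[of x y] h_nonneg by (simp add: ennreal_plus[symmetric] del: ennreal_plus)
  qed
  have "(\<integral>\<^sup>+x. \<integral>\<^sup>+y. ennreal (g x * g y * G x y) \<partial>M \<partial>M)
      \<le> (\<integral>\<^sup>+x. (\<integral>\<^sup>+y. ennreal (h x * G x y) \<partial>M) + (\<integral>\<^sup>+y. ennreal (h y * G x y) \<partial>M) \<partial>M)"
    by (intro nn_integral_mono order_trans[OF _ nn_integral_add[THEN eq_refl]] amgm) measurable
  also have "\<dots> = (\<integral>\<^sup>+x. \<integral>\<^sup>+y. ennreal (h x * G x y) \<partial>M \<partial>M) + (\<integral>\<^sup>+y. \<integral>\<^sup>+x. ennreal (h y * G x y) \<partial>M \<partial>M)"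
  proof -
    have swap: "(\<integral>\<^sup>+x. \<integral>\<^sup>+y. ennreal (h y * G x y) \<partial>M \<partial>M) = (\<integral>\<^sup>+y. \<integral>\<^sup>+x. ennreal (h y * G x y) \<partial>M \<partial>M)"
      by (rule Fubini') measurable
    show ?thesis by (subst nn_integral_add) (measurable, simp only: swap)
  qed
  also have "\<dots> \<le> C * (\<integral>\<^sup>+x. h x \<partial>M) + C * (\<integral>\<^sup>+x. h x \<partial>M)"
    using sf h_nonneg rows cols by (intro add_mono kernel_row_bound) measurable
  also have "\<dots> = C * (\<integral>\<^sup>+x. ennreal ((g x)\<^sup>2) \<partial>M)"
    by (simp add: distrib_left[symmetric] nn_integral_add[symmetric] ennreal_plus[symmetric] h_def
        del: ennreal_plus)
  finally show ?thesis .
qed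

lemma integrable_pair_bound:
  fixes g :: "real \<times> real \<Rightarrow> 'b::{banach, second_countable_topology}"
  assumes g[measurable]: "g \<in> borel_measurable (lborel \<Otimes>\<^sub>M lborel)"
    and a: "integrable lborel a" and b: "integrable lborel b"
    and bd: "\<And>k x. norm (g (k, x)) \<le> a k * b x"
  shows "integrable (lborel \<Otimes>\<^sub>M lborel) g"
proof -
  have am[measurable]: "a \<in> borel_measurable borel" and bm[measurable]: "b \<in> borel_measurable borel"
    using a b by auto
  have "integrable (lborel \<Otimes>\<^sub>M lborel) (\<lambda>(k,x). a k * b x)"
  proof (rule pair_sigma_finite.Fubini_integrable)
    show "pair_sigma_finite lborel lborel" by unfold_locales
    show "(\<lambda>(k, x). a k * b x) \<in> borel_measurable (lborel \<Otimes>\<^sub>M lborel)" by measurable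
    show "integrable lborel (\<lambda>k. LINT x|lborel. norm (case (k, x) of (k, x) \<Rightarrow> a k * b x))"
      using a by (simp add: abs_mult)
    show "AE k in lborel. integrable lborel (\<lambda>x. case (k, x) of (k, x) \<Rightarrow> a k * b x)"
      using b by simp
  qed
  then show ?thesis
  proof (rule Bochner_Integration.integrable_bound)
    show "AE x in lborel \<Otimes>\<^sub>M lborel. norm (g x) \<le> norm (case x of (k, x) \<Rightarrow> a k * b x)"
      by (intro AE_I2) (auto intro: order_trans[OF bd])
  qed simp
qed

lemma borel_measurable_cnj[measurable (raw)]:
  "f \<in> borel_measurable M \<Longrightarrow> (\<lambda>x. cnj (f x :: complex)) \<in> borel_measurable M"
  by (rule borel_measurable_continuous_on) (intro continuous_intros)

definition ft_integral :: "(real \<Rightarrow> complex) \<Rightarrow> real \<Rightarrow> complex" where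
  "ft_integral h k = (LINT x|lborel. exp (- (\<i> * complex_of_real (k * x))) * h x)"

lemma ft_integral_measurable[measurable]:
  assumes [measurable]: "h \<in> borel_measurable borel"
  shows "ft_integral h \<in> borel_measurable borel"
  unfolding ft_integral_def by measurable

lemma norm_ft_integral_le: "cmod (ft_integral h k) \<le> (LINT x|lborel. cmod (h x))"
  unfolding ft_integral_def
  by (rule order_trans[OF integral_norm_bound]) (simp add: norm_mult)

lemma cnj_ft_integral: "cnj (ft_integral h k) = (LINT y|lborel. exp (\<i> * complex_of_real (k * y)) * cnj (h y))"
  unfolding ft_integral_def Bochner_Integration.integral_cnj[symmetric] by (simp add: exp_cnj)

text \<open>Fourier transform of the Gaussian, via the characteristic function of the standard normal
  distribution and an affine change of variables.\<close>
lemma gauss_ft: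
  fixes s t :: real assumes s: "s > 0"
  shows "(LINT k|lborel. exp (-(s*k)\<^sup>2/2) *\<^sub>R iexp (k*t)) = complex_of_real (sqrt (2*pi) / s * exp (-(t/s)\<^sup>2/2))"
proof -
  have "char std_normal_distribution (t/s) = complex_of_real (exp (-(t/s)\<^sup>2/2))"
    by (simp add: char_std_normal_distribution)
  also have "char std_normal_distribution (t/s) = (LINT x|lborel. std_normal_density x *\<^sub>R iexp ((t/s)*x))"
    unfolding char_def by (subst integral_density) auto
  also have "\<dots> = (1 / sqrt (2 * pi)) *\<^sub>R (LINT x|lborel. exp (- x\<^sup>2 / 2) *\<^sub>R iexp ((t/s)*x))"
    by (simp add: std_normal_density_def integral_scaleR_right[symmetric])
  finally have std_scaled: "(1 / sqrt (2 * pi)) *\<^sub>R (LINT x|lborel. exp (- x\<^sup>2 / 2) *\<^sub>R iexp ((t/s)*x)) = complex_of_real (exp (-(t/s)\<^sup>2/2))"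
    by simp
  have std: "(LINT x|lborel. exp (- x\<^sup>2 / 2) *\<^sub>R iexp ((t/s)*x)) = sqrt (2*pi) *\<^sub>R complex_of_real (exp (-(t/s)\<^sup>2/2))"
    unfolding std_scaled[symmetric] by simp
  have "(LINT k|lborel. exp (-(s*k)\<^sup>2/2) *\<^sub>R iexp (k*t)) = \<bar>1/s\<bar> *\<^sub>R (LINT x|lborel. exp (-(s*(0 + 1/s*x))\<^sup>2/2) *\<^sub>R iexp ((0 + 1/s*x)*t))"
    by (rule lborel_integral_real_affine) (use s in auto)
  also have "(\<lambda>x. exp (-(s*(0 + 1/s*x))\<^sup>2/2) *\<^sub>R iexp ((0 + 1/s*x)*t)) = (\<lambda>x. exp (- x\<^sup>2 / 2) *\<^sub>R iexp ((t/s)*x))"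
    using s by (auto simp: field_simps)
  finally show ?thesis using s std by (simp add: scaleR_conv_of_real)
qed

definition gauss_kernel :: "real \<Rightarrow> real \<Rightarrow> real \<Rightarrow> real" where
  "gauss_kernel s x y = 2 * pi * normal_density x s y"

lemma gauss_kernel_nonneg: "0 \<le> gauss_kernel s x y"
  unfolding gauss_kernel_def by simp

lemma gauss_kernel_sym: "gauss_kernel s x y = gauss_kernel s y x"
  unfolding gauss_kernel_def normal_density_def by (simp add: power2_commute)

lemma gauss_kernel_measurable[measurable]:
  "(\<lambda>(x, y). gauss_kernel s x y) \<in> borel_measurable (lborel \<Otimes>\<^sub>M lborel)"
  unfolding gauss_kernel_def normal_density_def by measurable

lemma gauss_kernel_integral:
  assumes "s > 0" shows "(\<integral>\<^sup>+y. gauss_kernel s x y \<partial>lborel) = ennreal (2 * pi)"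
proof -
  have "(\<integral>\<^sup>+y. ennreal (normal_density x s y) \<partial>lborel) = 1"
    using assms by (subst nn_integral_eq_integral) (auto intro: integrable_normal_density simp: integral_normal_density)
  then show ?thesis
    unfolding gauss_kernel_def by (simp add: ennreal_mult nn_integral_cmult)
qed

lemma fourier_gaussian:
  assumes s: "s > 0"
  shows "(LINT k|lborel. exp (-(s*k)\<^sup>2/2) *\<^sub>R iexp (k*(y-x))) = complex_of_real (gauss_kernel s x y)"
proof -
  have "sqrt (2 * pi * s\<^sup>2) = sqrt (2*pi) * s" using s by (simp add: real_sqrt_mult)
  then have "gauss_kernel s x y = sqrt (2*pi) / s * exp (-((y-x)/s)\<^sup>2/2)"
    unfolding gauss_kernel_def normal_density_def using s
    by (simp add: power_divide field_simps)
  then show ?thesis unfolding gauss_ft[OF s] by simp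
qed

lemma gaussian_integrable:
  fixes s :: real assumes s: "s > 0" shows "integrable lborel (\<lambda>k. exp (-(s*k)\<^sup>2/2))"
proof -
  have sq: "sqrt (2*pi*(1/s)\<^sup>2) = sqrt (2*pi) / s"
    using s by (simp add: real_sqrt_mult real_sqrt_divide)
  have "(\<lambda>k. exp (-(s*k)\<^sup>2/2)) = (\<lambda>k. sqrt (2*pi) / s * normal_density 0 (1/s) k)"
    unfolding normal_density_def sq using s by (auto simp: fun_eq_iff field_simps power2_eq_square)
  then show ?thesis using s by (simp add: integrable_normal_density)
qed

text \<open>Fubini in the frequency variable: for fixed x, integrating the Gaussian-damped modulated
  conjugate transform against k produces the heat kernel.\<close>
lemma gaussian_smoothing_inner:
  assumes hi: "integrable lborel h" and s: "s > 0"
  shows "(LINT k|lborel. exp (-(s*k)\<^sup>2/2) *\<^sub>R (exp (- (\<i> * complex_of_real (k * x))) * cnj (ft_integral h k)))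
       = (LINT y|lborel. cnj (h y) * complex_of_real (gauss_kernel s x y))"
proof -
  have [measurable]: "h \<in> borel_measurable borel" using hi by auto
  define \<phi> where "\<phi> = (\<lambda>k::real. exp (-(s*k)\<^sup>2/2))"
  have modulate: "exp (- (\<i> * complex_of_real (k * x))) * (exp (\<i> * complex_of_real (k * y)) * w)
      = exp (\<i> * complex_of_real (k * (y - x))) * w" for k y w
  proof -
    have "- (\<i> * complex_of_real (k * x)) + \<i> * complex_of_real (k * y) = \<i> * complex_of_real (k * (y - x))"
      by (simp add: algebra_simps)
    then show ?thesis by (simp only: mult.assoc[symmetric] exp_add[symmetric])
  qed
  have joint: "integrable (lborel \<Otimes>\<^sub>M lborel) (\<lambda>(k,y). \<phi> k *\<^sub>R (exp (\<i> * complex_of_real (k * (y - x))) * cnj (h y)))"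
  proof (rule integrable_pair_bound[where a=\<phi> and b="\<lambda>y. cmod (h y)"])
    show "integrable lborel \<phi>" unfolding \<phi>_def by (rule gaussian_integrable[OF s])
    show "integrable lborel (\<lambda>y. cmod (h y))" using hi by simp
    show "norm ((\<lambda>(k,y). \<phi> k *\<^sub>R (exp (\<i> * complex_of_real (k * (y - x))) * cnj (h y))) (k, y)) \<le> \<phi> k * cmod (h y)" for k y
      by (simp add: \<phi>_def norm_mult)
  qed (simp add: \<phi>_def; measurable)
  have "(LINT k|lborel. \<phi> k *\<^sub>R (exp (- (\<i> * complex_of_real (k * x))) * cnj (ft_integral h k)))
      = (LINT k|lborel. LINT y|lborel. \<phi> k *\<^sub>R (exp (\<i> * complex_of_real (k * (y - x))) * cnj (h y)))"
  proof (rule Bochner_Integration.integral_cong[OF refl])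
    fix k
    have "(LINT y|lborel. \<phi> k *\<^sub>R (exp (\<i> * complex_of_real (k * (y - x))) * cnj (h y)))
        = \<phi> k *\<^sub>R (LINT y|lborel. exp (- (\<i> * complex_of_real (k * x))) * (exp (\<i> * complex_of_real (k * y)) * cnj (h y)))"
      by (simp only: integral_scaleR_right modulate)
    also have "\<dots> = \<phi> k *\<^sub>R (exp (- (\<i> * complex_of_real (k * x))) * cnj (ft_integral h k))"
      by (simp only: integral_mult_right_zero cnj_ft_integral)
    finally show "\<phi> k *\<^sub>R (exp (- (\<i> * complex_of_real (k * x))) * cnj (ft_integral h k))
        = (LINT y|lborel. \<phi> k *\<^sub>R (exp (\<i> * complex_of_real (k * (y - x))) * cnj (h y)))" ..
  qed
  also have "\<dots> = (LINT y|lborel. LINT k|lborel. \<phi> k *\<^sub>R (exp (\<i> * complex_of_real (k * (y - x))) * cnj (h y)))"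
    using pair_sigma_finite.Fubini_integral[OF _ joint] by (simp add: pair_sigma_finite_def lborel.sigma_finite_measure_axioms)
  also have "\<dots> = (LINT y|lborel. cnj (h y) * complex_of_real (gauss_kernel s x y))"
  proof (rule Bochner_Integration.integral_cong[OF refl])
    fix y
    have "\<And>k. \<phi> k *\<^sub>R (exp (\<i> * complex_of_real (k * (y - x))) * cnj (h y)) = cnj (h y) * (exp (-(s*k)\<^sup>2/2) *\<^sub>R iexp (k*(y-x)))"
      by (simp only: \<phi>_def scaleR_conv_of_real mult_ac)
    then show "(LINT k|lborel. \<phi> k *\<^sub>R (exp (\<i> * complex_of_real (k * (y - x))) * cnj (h y)))
        = cnj (h y) * complex_of_real (gauss_kernel s x y)"
      by (simp only: integral_mult_right_zero fourier_gaussian[OF s])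
  qed
  finally show ?thesis unfolding \<phi>_def .
qed

lemma gaussian_smoothed_energy:
  assumes hi: "integrable lborel h" and s: "s > 0"
  shows "complex_of_real (LINT k|lborel. exp (-(s*k)\<^sup>2/2) * (cmod (ft_integral h k))\<^sup>2)
       = (LINT x|lborel. h x * (LINT y|lborel. cnj (h y) * complex_of_real (gauss_kernel s x y)))"
proof -
  have [measurable]: "h \<in> borel_measurable borel" using hi by auto
  define \<phi> where "\<phi> = (\<lambda>k::real. exp (-(s*k)\<^sup>2/2))"
  define F where "F = ft_integral h"
  define N where "N = (LINT x|lborel. cmod (h x))"
  have joint: "integrable (lborel \<Otimes>\<^sub>M lborel) (\<lambda>(k,x). \<phi> k *\<^sub>R (exp (- (\<i> * complex_of_real (k * x))) * h x * cnj (F k)))"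
  proof (rule integrable_pair_bound[where a="\<lambda>k. \<phi> k * N" and b="\<lambda>x. cmod (h x)"])
    fix k x
    have "\<phi> k * (cmod (F k) * cmod (h x)) \<le> \<phi> k * (N * cmod (h x))"
      using norm_ft_integral_le[of h k] by (intro mult_left_mono mult_right_mono) (auto simp: \<phi>_def F_def N_def)
    then show "norm ((\<lambda>(k,x). \<phi> k *\<^sub>R (exp (- (\<i> * complex_of_real (k * x))) * h x * cnj (F k))) (k, x)) \<le> \<phi> k * N * cmod (h x)"
      by (simp add: \<phi>_def norm_mult mult_ac)
  next
    show "integrable lborel (\<lambda>k. \<phi> k * N)" unfolding \<phi>_def using gaussian_integrable[OF s] by simp
    show "integrable lborel (\<lambda>x. cmod (h x))" using hi by simp
  qed (simp add: \<phi>_def F_def; measurable)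
  have "complex_of_real (LINT k|lborel. \<phi> k * (cmod (F k))\<^sup>2) = (LINT k|lborel. \<phi> k *\<^sub>R (F k * cnj (F k)))"
  proof -
    have "\<And>k. \<phi> k *\<^sub>R (F k * cnj (F k)) = complex_of_real (\<phi> k * (cmod (F k))\<^sup>2)"
      unfolding complex_norm_square[symmetric] by (simp add: scaleR_conv_of_real)
    then show ?thesis by (simp only: integral_complex_of_real)
  qed
  also have "\<dots> = (LINT k|lborel. LINT x|lborel. \<phi> k *\<^sub>R (exp (- (\<i> * complex_of_real (k * x))) * h x * cnj (F k)))"
    unfolding F_def ft_integral_def
    by (rule Bochner_Integration.integral_cong[OF refl]) (simp only: integral_scaleR_right integral_mult_left_zero)
  also have "\<dots> = (LINT x|lborel. LINT k|lborel. \<phi> k *\<^sub>R (exp (- (\<i> * complex_of_real (k * x))) * h x * cnj (F k)))"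
    using pair_sigma_finite.Fubini_integral[OF _ joint] by (simp add: pair_sigma_finite_def lborel.sigma_finite_measure_axioms)
  also have "\<dots> = (LINT x|lborel. h x * (LINT k|lborel. \<phi> k *\<^sub>R (exp (- (\<i> * complex_of_real (k * x))) * cnj (F k))))"
    by (simp only: scaleR_conv_of_real mult_ac integral_mult_right_zero)
  also have "\<dots> = (LINT x|lborel. h x * (LINT y|lborel. cnj (h y) * complex_of_real (gauss_kernel s x y)))"
    unfolding \<phi>_def F_def gaussian_smoothing_inner[OF hi s] ..
  finally show ?thesis unfolding \<phi>_def F_def .
qed

lemma norm_integral_le_nn_integral:
  fixes f :: "'a \<Rightarrow> 'b::{banach, second_countable_topology}"
  shows "ennreal (norm (integral\<^sup>L M f)) \<le> (\<integral>\<^sup>+x. norm (f x) \<partial>M)"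
  by (cases "integrable M f") (auto simp: integral_norm_bound_ennreal not_integrable_integral_eq)

text \<open>Plancherel inequality with a Gaussian damping factor in frequency: the quadratic form
  of the heat kernel is controlled by a Schur test, the kernel having total mass 2 pi.\<close>
lemma plancherel_gaussian:
  assumes hi: "integrable lborel h" and s: "s > 0"
  shows "(\<integral>\<^sup>+k. ennreal (exp (-(s*k)\<^sup>2/2) * (cmod (ft_integral h k))\<^sup>2) \<partial>lborel) \<le> 2 * pi * energy h"
proof -
  have [measurable]: "h \<in> borel_measurable borel" using hi by auto
  define \<phi> where "\<phi> = (\<lambda>k::real. exp (-(s*k)\<^sup>2/2))"
  define N where "N = (LINT x|lborel. cmod (h x))"
  define G where "G = gauss_kernel s"
  have G_nonneg: "\<And>x y. 0 \<le> G x y" unfolding G_def by (rule gauss_kernel_nonneg)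
  have damped_integrable: "integrable lborel (\<lambda>k. \<phi> k * (cmod (ft_integral h k))\<^sup>2)"
  proof (rule Bochner_Integration.integrable_bound)
    show "integrable lborel (\<lambda>k. \<phi> k * N\<^sup>2)" unfolding \<phi>_def using gaussian_integrable[OF s] by simp
    show "AE k in lborel. norm (\<phi> k * (cmod (ft_integral h k))\<^sup>2) \<le> norm (\<phi> k * N\<^sup>2)"
      using norm_ft_integral_le[of h] by (auto intro!: mult_left_mono power_mono simp: \<phi>_def N_def abs_mult)
  qed (simp add: \<phi>_def; measurable)
  have kernel_form: "ennreal (norm (h x * (LINT y|lborel. cnj (h y) * complex_of_real (G x y))))
      \<le> (\<integral>\<^sup>+y. ennreal (cmod (h x) * cmod (h y) * G x y) \<partial>lborel)" for x
  proof -
    have "ennreal (norm (LINT y|lborel. cnj (h y) * complex_of_real (G x y))) \<le> (\<integral>\<^sup>+y. norm (cnj (h y) * complex_of_real (G x y)) \<partial>lborel)"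
      by (rule norm_integral_le_nn_integral)
    also have "\<dots> = (\<integral>\<^sup>+y. ennreal (cmod (h y) * G x y) \<partial>lborel)"
      using G_nonneg by (simp add: norm_mult)
    finally have "ennreal (norm (h x * (LINT y|lborel. cnj (h y) * complex_of_real (G x y))))
        \<le> ennreal (cmod (h x)) * (\<integral>\<^sup>+y. ennreal (cmod (h y) * G x y) \<partial>lborel)"
      by (simp add: norm_mult ennreal_mult mult_left_mono)
    also have "\<dots> = (\<integral>\<^sup>+y. ennreal (cmod (h x) * cmod (h y) * G x y) \<partial>lborel)"
      by (subst nn_integral_cmult[symmetric]) (simp_all add: G_def ennreal_mult' mult.assoc)
    finally show ?thesis .
  qed
  have "(\<integral>\<^sup>+k. ennreal (\<phi> k * (cmod (ft_integral h k))\<^sup>2) \<partial>lborel) = ennreal (LINT k|lborel. \<phi> k * (cmod (ft_integral h k))\<^sup>2)"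
    using damped_integrable by (subst nn_integral_eq_integral) (auto simp: \<phi>_def)
  also have "\<dots> \<le> ennreal (cmod (complex_of_real (LINT k|lborel. \<phi> k * (cmod (ft_integral h k))\<^sup>2)))"
    by (intro ennreal_leI) simp
  also have "\<dots> = ennreal (norm (LINT x|lborel. h x * (LINT y|lborel. cnj (h y) * complex_of_real (G x y))))"
    unfolding \<phi>_def G_def gaussian_smoothed_energy[OF hi s] ..
  also have "\<dots> \<le> (\<integral>\<^sup>+x. norm (h x * (LINT y|lborel. cnj (h y) * complex_of_real (G x y))) \<partial>lborel)"
    by (rule norm_integral_le_nn_integral)
  also have "\<dots> \<le> (\<integral>\<^sup>+x. \<integral>\<^sup>+y. ennreal (cmod (h x) * cmod (h y) * G x y) \<partial>lborel \<partial>lborel)"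
    by (intro nn_integral_mono kernel_form)
  also have "\<dots> \<le> ennreal (2 * pi) * (\<integral>\<^sup>+x. ennreal ((cmod (h x))\<^sup>2) \<partial>lborel)"
  proof (rule schur_test)
    show "sigma_finite_measure lborel" by (rule lborel.sigma_finite_measure_axioms)
    show "\<And>x. (\<integral>\<^sup>+y. G x y \<partial>lborel) \<le> ennreal (2 * pi)" "\<And>y. (\<integral>\<^sup>+x. G x y \<partial>lborel) \<le> ennreal (2 * pi)"
      unfolding G_def using gauss_kernel_integral[OF s] gauss_kernel_sym[of s] by simp_all
  qed (simp_all add: G_def gauss_kernel_nonneg)
  finally show ?thesis by (simp add: \<phi>_def ennreal_mult)
qed

text \<open>Plancherel inequality for integrable functions, by letting the damping tend to zero
  (Fatou's lemma).\<close>
lemma plancherel: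
  assumes hi: "integrable lborel h"
  shows "(\<integral>\<^sup>+k. ennreal ((cmod (ft_integral h k))\<^sup>2) \<partial>lborel) \<le> 2 * pi * energy h"
proof -
  have [measurable]: "h \<in> borel_measurable borel" using hi by auto
  define F where "F = ft_integral h"
  define damped where "damped = (\<lambda>n k. ennreal (exp (-((1 / Suc n)*k)\<^sup>2/2) * (cmod (F k))\<^sup>2))"
  have damped_meas: "\<And>n. damped n \<in> borel_measurable lborel" unfolding damped_def F_def by measurable
  have damped_lim: "(\<lambda>n. damped n k) \<longlonglongrightarrow> ennreal ((cmod (F k))\<^sup>2)" for k
  proof -
    have "(\<lambda>n. 1 / real (Suc n)) \<longlonglongrightarrow> 0" by (rule LIMSEQ_Suc[OF lim_const_over_n])
    then have "(\<lambda>n. exp (-((1 / Suc n)*k)\<^sup>2/2) * (cmod (F k))\<^sup>2) \<longlonglongrightarrow> exp (-(0*k)\<^sup>2/2) * (cmod (F k))\<^sup>2"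
      by (intro tendsto_intros) simp_all
    then show ?thesis unfolding damped_def by (intro tendsto_ennrealI) simp
  qed
  have "(\<integral>\<^sup>+k. ennreal ((cmod (F k))\<^sup>2) \<partial>lborel) = (\<integral>\<^sup>+k. liminf (\<lambda>n. damped n k) \<partial>lborel)"
    using damped_lim by (intro nn_integral_cong) (rule lim_imp_Liminf[symmetric], simp_all)
  also have "\<dots> \<le> liminf (\<lambda>n. integral\<^sup>N lborel (damped n))"
    by (rule nn_integral_liminf[OF damped_meas])
  also have "\<dots> \<le> 2 * pi * energy h"
  proof (rule Liminf_le[OF trivial_limit_sequentially], rule always_eventually, rule allI)
    fix n
    show "integral\<^sup>N lborel (damped n) \<le> 2 * pi * energy h"
      unfolding damped_def F_def by (rule plancherel_gaussian[OF hi]) simp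
  qed
  finally show ?thesis unfolding F_def .
qed

section \<open>The L2 Fourier transform of Defs\<close>

lemma fourier_trunc_eq:
  "fourier_trunc u n k = ft_integral (\<lambda>x. indicator {- real n..real n} x *\<^sub>R u x) k / complex_of_real (sqrt (2 * pi))"
  unfolding fourier_trunc_def ft_integral_def by (simp add: mult_ac)

lemma trunc_integrable:
  assumes u: "u \<in> L2"
  shows "integrable lborel (\<lambda>x. indicator {- real n..real n} x *\<^sub>R u x)"
proof (rule Bochner_Integration.integrable_bound)
  show "integrable lborel (\<lambda>x. indicator {- real n..real n} x + (cmod (u x))\<^sup>2 :: real)"
    using L2_sq_integrable[OF u] by (intro Bochner_Integration.integrable_add) (auto simp: emeasure_lborel_Icc)
  have [measurable]: "u \<in> borel_measurable borel" using u L2_meas by auto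
  show "(\<lambda>x. indicator {- real n..real n} x *\<^sub>R u x) \<in> borel_measurable lborel" by measurable
  have "cmod (u x) \<le> 1 + (cmod (u x))\<^sup>2" for x
  proof -
    have "2 * cmod (u x) * 1 \<le> (cmod (u x))\<^sup>2 + 1\<^sup>2" by (rule sum_squares_bound)
    then show ?thesis using norm_ge_zero[of "u x"] by (simp only: mult_1_right power_one)
  qed
  then show "AE x in lborel. norm (indicator {- real n..real n} x *\<^sub>R u x) \<le> norm (indicator {- real n..real n} x + (cmod (u x))\<^sup>2 :: real)"
    by (intro AE_I2) (auto simp: indicator_def)
qed

lemma fourier_trunc_measurable: "u \<in> L2 \<Longrightarrow> fourier_trunc u n \<in> borel_measurable borel"
  using L2_meas[of u] unfolding fourier_trunc_def by measurable

lemma fourier_trunc_energy: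
  assumes u: "u \<in> L2"
  shows "energy (fourier_trunc u n) \<le> energy u"
proof -
  define h where "h = (\<lambda>x. indicator {- real n..real n} x *\<^sub>R u x)"
  have hi: "integrable lborel h" unfolding h_def by (rule trunc_integrable[OF u])
  have [measurable]: "h \<in> borel_measurable borel" using hi by auto
  have "energy (fourier_trunc u n) = (\<integral>\<^sup>+k. ennreal (1 / (2*pi)) * ennreal ((cmod (ft_integral h k))\<^sup>2) \<partial>lborel)"
    unfolding fourier_trunc_eq h_def
    by (intro nn_integral_cong) (simp add: norm_divide power_divide ennreal_mult[symmetric] del: ennreal_mult)
  also have "\<dots> = ennreal (1 / (2*pi)) * (\<integral>\<^sup>+k. ennreal ((cmod (ft_integral h k))\<^sup>2) \<partial>lborel)"
    by (rule nn_integral_cmult) measurable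
  also have "\<dots> \<le> ennreal (1 / (2*pi)) * (2 * pi * energy h)"
    by (intro mult_left_mono plancherel[OF hi]) simp
  also have "\<dots> = energy h"
    by (simp add: mult.assoc[symmetric] ennreal_mult[symmetric] del: ennreal_mult)
  also have "\<dots> \<le> energy u"
    unfolding h_def by (intro nn_integral_mono) (auto simp: indicator_def)
  finally show ?thesis .
qed

lemma has_fourier_L2_L2: "has_fourier_L2 u U \<Longrightarrow> u \<in> L2 \<and> U \<in> L2"
  unfolding has_fourier_L2_def by auto

lemma has_fourier_L2_lim:
  "has_fourier_L2 u U \<Longrightarrow> (\<lambda>n. energy (\<lambda>k. U k - fourier_trunc u n k)) \<longlonglongrightarrow> 0"
  unfolding has_fourier_L2_def by auto

lemma has_fourier_L2_fourier_L2: "u \<in> Hs s \<Longrightarrow> has_fourier_L2 u (fourier_L2 u)"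
  unfolding Hs_def fourier_L2_def by (auto intro: someI[of "has_fourier_L2 u"])

lemma ennreal_le_of_lim:
  fixes A B c :: ennreal
  assumes "\<And>n. A \<le> c * a n + B" "a \<longlonglongrightarrow> 0" "c < top"
  shows "A \<le> B"
proof -
  have "(\<lambda>n. c * a n + B) \<longlonglongrightarrow> c * 0 + B"
    by (intro tendsto_add ennreal_tendsto_cmult assms tendsto_const)
  then show ?thesis using assms(1) by (intro LIMSEQ_le_const) auto
qed

lemma ennreal_lim_zero_dominated:
  fixes A :: "nat \<Rightarrow> ennreal"
  assumes "\<And>n. A n \<le> c * a n + d * b n" "a \<longlonglongrightarrow> 0" "b \<longlonglongrightarrow> 0" "c < top" "d < top"
  shows "A \<longlonglongrightarrow> 0"
proof (rule tendsto_sandwich[of "\<lambda>_. 0" _ _ "\<lambda>n. c * a n + d * b n"])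
  have "(\<lambda>n. c * a n + d * b n) \<longlonglongrightarrow> c * 0 + d * 0"
    by (intro tendsto_add ennreal_tendsto_cmult assms)
  then show "(\<lambda>n. c * a n + d * b n) \<longlonglongrightarrow> 0" by simp
qed (use assms in auto)

lemma has_fourier_L2_energy:
  assumes h: "has_fourier_L2 u U"
  shows "energy U \<le> 2 * energy u"
proof (rule ennreal_le_of_lim[OF _ has_fourier_L2_lim[OF h]])
  fix n
  have u: "u \<in> L2" and U: "U \<in> L2" using has_fourier_L2_L2[OF h] by auto
  have [measurable]: "U \<in> borel_measurable borel" "fourier_trunc u n \<in> borel_measurable borel"
    using L2_meas[OF U] fourier_trunc_measurable[OF u] by auto
  have "energy U \<le> (\<integral>\<^sup>+k. 2 * ennreal ((cmod (U k - fourier_trunc u n k))\<^sup>2) + 2 * ennreal ((cmod (fourier_trunc u n k))\<^sup>2) \<partial>lborel)"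
    by (intro nn_integral_mono) (metis sq_norm_add_le_ennreal diff_add_cancel)
  also have "\<dots> = 2 * energy (\<lambda>k. U k - fourier_trunc u n k) + 2 * energy (fourier_trunc u n)"
    by (subst nn_integral_add, measurable, subst nn_integral_cmult, measurable, subst nn_integral_cmult, measurable)
  also have "\<dots> \<le> 2 * energy (\<lambda>k. U k - fourier_trunc u n k) + 2 * energy u"
    by (intro add_left_mono mult_left_mono fourier_trunc_energy[OF u]) simp
  finally show "energy U \<le> 2 * energy (\<lambda>k. U k - fourier_trunc u n k) + 2 * energy u" .
qed simp

lemma has_fourier_L2_unique:
  assumes h1: "has_fourier_L2 u U" and h2: "has_fourier_L2 u U'"
  shows "AE k in lborel. U k = U' k"
proof -
  have u: "u \<in> L2" and U: "U \<in> L2" and U': "U' \<in> L2" using has_fourier_L2_L2[OF h1] has_fourier_L2_L2[OF h2] by auto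
  have [measurable]: "U \<in> borel_measurable borel" "U' \<in> borel_measurable borel" "\<And>n. fourier_trunc u n \<in> borel_measurable borel"
    using L2_meas[OF U] L2_meas[OF U'] fourier_trunc_measurable[OF u] by auto
  define dist_n where "dist_n = (\<lambda>n. energy (\<lambda>k. U k - fourier_trunc u n k) + energy (\<lambda>k. U' k - fourier_trunc u n k))"
  have "energy (\<lambda>k. U k - U' k) \<le> 0"
  proof (rule ennreal_le_of_lim[where a=dist_n and c=2])
    fix n
    have "energy (\<lambda>k. U k - U' k)
        \<le> (\<integral>\<^sup>+k. 2 * ennreal ((cmod (U k - fourier_trunc u n k))\<^sup>2) + 2 * ennreal ((cmod (fourier_trunc u n k - U' k))\<^sup>2) \<partial>lborel)"
      by (intro nn_integral_mono) (metis sq_norm_add_le_ennreal diff_add_cancel add_diff_eq)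
    also have "\<dots> = 2 * dist_n n"
      unfolding dist_n_def
      by (subst nn_integral_add, measurable, subst nn_integral_cmult, measurable, subst nn_integral_cmult, measurable)
         (simp add: norm_minus_commute distrib_left)
    finally show "energy (\<lambda>k. U k - U' k) \<le> 2 * dist_n n + 0" by simp
  next
    show "dist_n \<longlonglongrightarrow> 0"
      using tendsto_add[OF has_fourier_L2_lim[OF h1] has_fourier_L2_lim[OF h2]] by (simp add: dist_n_def)
  qed simp
  then have "energy (\<lambda>k. U k - U' k) = 0" by simp
  then have "AE k in lborel. ennreal ((cmod (U k - U' k))\<^sup>2) = 0"
    by (subst (asm) nn_integral_0_iff_AE) auto
  then show ?thesis by eventually_elim simp
qed

lemma fourier_trunc_linear:
  assumes u: "u \<in> L2" and w: "w \<in> L2" and v: "v \<in> L2"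
    and ae: "AE x in lborel. v x = a * u x + b * w x"
  shows "fourier_trunc v n k = a * fourier_trunc u n k + b * fourier_trunc w n k"
proof -
  have [measurable]: "u \<in> borel_measurable borel" "v \<in> borel_measurable borel" "w \<in> borel_measurable borel"
    using u v w L2_meas by auto
  define E where "E = (\<lambda>x. exp (- (\<i> * complex_of_real (k * x))))"
  define I where "I = (\<lambda>x. indicator {- real n..real n} x :: real)"
  have int_trunc: "integrable lborel (\<lambda>x. E x * (I x *\<^sub>R g x))" if "g \<in> L2" for g
  proof (rule Bochner_Integration.integrable_bound[OF integrable_norm[OF trunc_integrable[OF that, of n]]])
    show "(\<lambda>x. E x * (I x *\<^sub>R g x)) \<in> borel_measurable lborel"
      using L2_meas[OF that] unfolding E_def I_def by measurable
  qed (simp add: E_def I_def norm_mult)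
  have "(LINT x|lborel. E x * (I x *\<^sub>R v x)) = (LINT x|lborel. a * (E x * (I x *\<^sub>R u x)) + b * (E x * (I x *\<^sub>R w x)))"
  proof (rule integral_cong_AE)
    show "AE x in lborel. E x * (I x *\<^sub>R v x) = a * (E x * (I x *\<^sub>R u x)) + b * (E x * (I x *\<^sub>R w x))"
      using ae by eventually_elim (simp add: algebra_simps scaleR_conv_of_real)
  qed (simp_all add: E_def I_def)
  also have "\<dots> = a * (LINT x|lborel. E x * (I x *\<^sub>R u x)) + b * (LINT x|lborel. E x * (I x *\<^sub>R w x))"
    by (simp only: Bochner_Integration.integral_add integrable_mult_right int_trunc u w integral_mult_right_zero)
  finally show ?thesis
    unfolding fourier_trunc_eq ft_integral_def E_def I_def by (simp add: add_divide_distrib)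
qed

lemma has_fourier_L2_linear:
  assumes hu: "has_fourier_L2 u U" and hw: "has_fourier_L2 w W" and v: "v \<in> L2"
    and ae: "AE x in lborel. v x = a * u x + b * w x"
  shows "has_fourier_L2 v (\<lambda>k. a * U k + b * W k)"
  unfolding has_fourier_L2_def
proof (intro conjI)
  have u: "u \<in> L2" and U: "U \<in> L2" and w: "w \<in> L2" and W: "W \<in> L2" using has_fourier_L2_L2 hu hw by auto
  have [measurable]: "U \<in> borel_measurable borel" "W \<in> borel_measurable borel"
    "\<And>n. fourier_trunc u n \<in> borel_measurable borel" "\<And>n. fourier_trunc w n \<in> borel_measurable borel"
    using L2_meas[OF U] L2_meas[OF W] fourier_trunc_measurable[OF u] fourier_trunc_measurable[OF w] by auto
  show "v \<in> L2" by fact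
  show "(\<lambda>k. a * U k + b * W k) \<in> L2" using L2_lin[OF U W] .
  show "(\<lambda>n. energy (\<lambda>k. a * U k + b * W k - fourier_trunc v n k)) \<longlonglongrightarrow> 0"
  proof (rule ennreal_lim_zero_dominated[OF _ has_fourier_L2_lim[OF hu] has_fourier_L2_lim[OF hw]])
    fix n
    have "energy (\<lambda>k. a * U k + b * W k - fourier_trunc v n k)
       = energy (\<lambda>k. a * (U k - fourier_trunc u n k) + b * (W k - fourier_trunc w n k))"
      unfolding fourier_trunc_linear[OF u w v ae] by (simp add: algebra_simps)
    also have "\<dots> \<le> (\<integral>\<^sup>+ k. 2 * ennreal ((cmod a)\<^sup>2) * ennreal ((cmod (U k - fourier_trunc u n k))\<^sup>2) + 2 * ennreal ((cmod b)\<^sup>2) * ennreal ((cmod (W k - fourier_trunc w n k))\<^sup>2) \<partial>lborel)"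
      by (intro nn_integral_mono order_trans[OF sq_norm_add_le_ennreal])
         (simp add: norm_mult power_mult_distrib ennreal_mult mult.assoc)
    also have "\<dots> = 2 * ennreal ((cmod a)\<^sup>2) * energy (\<lambda>k. U k - fourier_trunc u n k) + 2 * ennreal ((cmod b)\<^sup>2) * energy (\<lambda>k. W k - fourier_trunc w n k)"
      by (subst nn_integral_add, measurable, subst nn_integral_cmult, measurable, subst nn_integral_cmult, measurable)
    finally show "energy (\<lambda>k. a * U k + b * W k - fourier_trunc v n k)
       \<le> 2 * ennreal ((cmod a)\<^sup>2) * energy (\<lambda>k. U k - fourier_trunc u n k) + 2 * ennreal ((cmod b)\<^sup>2) * energy (\<lambda>k. W k - fourier_trunc w n k)" .
  qed (simp_all add: ennreal_mult_less_top)
qed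

section \<open>Symbol estimates\<close>

text \<open>The Fourier symbol of c - z - T M, with T the multiplier sym_T and M the multiplier alpha.\<close>
definition resolvent_symbol :: "(real \<Rightarrow> real) \<Rightarrow> real \<Rightarrow> real \<Rightarrow> complex \<Rightarrow> real \<Rightarrow> complex" where
  "resolvent_symbol \<alpha> c lam z k = complex_of_real c - z - sym_T c lam k * complex_of_real (\<alpha> k)"

lemma Re_sym_T: "Re (sym_T c lam k) = - (c*k)\<^sup>2 / (lam\<^sup>2 + (c*k)\<^sup>2)"
  unfolding sym_T_def Re_divide by (simp add: power2_eq_square)

lemma norm_sym_T_le:
  assumes "lam > 0" shows "cmod (sym_T c lam k) \<le> 1"
proof -
  have "\<bar>c * k\<bar> = sqrt ((c*k)\<^sup>2)" by simp
  also have "\<dots> \<le> sqrt (lam\<^sup>2 + (c*k)\<^sup>2)" by (intro real_sqrt_le_mono) simp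
  finally have "\<bar>c * k\<bar> \<le> sqrt (lam\<^sup>2 + (c*k)\<^sup>2)" .
  moreover have "sqrt (lam\<^sup>2 + (c*k)\<^sup>2) > 0" using assms by (simp add: add_pos_nonneg)
  ultimately show ?thesis
    unfolding sym_T_def norm_divide by (simp add: cmod_def norm_mult abs_mult)
qed

text \<open>Lower bound for the real part of the symbol: c/2 plus the dissipative contribution
  alpha |Re T| (note Re T \<le> 0).\<close>
definition symbol_margin :: "(real \<Rightarrow> real) \<Rightarrow> real \<Rightarrow> real \<Rightarrow> real \<Rightarrow> real" where
  "symbol_margin \<alpha> c lam k = c / 2 + \<alpha> k * ((c*k)\<^sup>2 / (lam\<^sup>2 + (c*k)\<^sup>2))"

lemma symbol_margin_ge: "0 \<le> \<alpha> k \<Longrightarrow> c / 2 \<le> symbol_margin \<alpha> c lam k"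
  unfolding symbol_margin_def by simp

lemma symbol_margin_le_norm:
  assumes "Re z \<le> c / 2" and "0 \<le> \<alpha> k" and "0 < c"
  shows "(symbol_margin \<alpha> c lam k)\<^sup>2 \<le> (cmod (resolvent_symbol \<alpha> c lam z k))\<^sup>2"
proof -
  have "Re (resolvent_symbol \<alpha> c lam z k) = c - Re z + \<alpha> k * ((c*k)\<^sup>2 / (lam\<^sup>2 + (c*k)\<^sup>2))"
    unfolding resolvent_symbol_def by (simp add: Re_sym_T)
  then have "symbol_margin \<alpha> c lam k \<le> Re (resolvent_symbol \<alpha> c lam z k)"
    using assms(1) unfolding symbol_margin_def by linarith
  moreover have "0 \<le> symbol_margin \<alpha> c lam k" using symbol_margin_ge[of \<alpha> k c lam, OF assms(2)] assms(3) by linarith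
  ultimately show ?thesis
    using abs_Re_le_cmod[of "resolvent_symbol \<alpha> c lam z k"] by (intro power_mono) auto
qed

lemma dissipation_ratio_ge_half:
  fixes lam c k :: real
  assumes "lam\<^sup>2 \<le> 1" and "1 \<le> \<bar>c * k\<bar>"
  shows "1/2 \<le> (c*k)\<^sup>2 / (lam\<^sup>2 + (c*k)\<^sup>2)"
proof -
  define q where "q = (c*k)\<^sup>2"
  have "1 \<le> q" unfolding q_def using assms(2) by (metis one_le_power power2_abs)
  then have "0 < lam\<^sup>2 + q" by (simp add: add_nonneg_pos)
  then show ?thesis using \<open>1 \<le> q\<close> assms(1) unfolding q_def[symmetric] by (simp add: field_simps)
qed

lemma symbol_margin_high_frequency:
  assumes "0 \<le> c" and "lam\<^sup>2 \<le> 1" and "1 \<le> \<bar>c * k\<bar>" and "0 \<le> \<alpha> k"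
  shows "\<alpha> k / 2 \<le> symbol_margin \<alpha> c lam k"
proof -
  have "\<alpha> k * (1/2) \<le> \<alpha> k * ((c*k)\<^sup>2 / (lam\<^sup>2 + (c*k)\<^sup>2))"
    using dissipation_ratio_ge_half[OF assms(2,3)] assms(4) by (intro mult_left_mono)
  then show ?thesis using assms(1) unfolding symbol_margin_def by linarith
qed

lemma weight_le_power:
  fixes k m :: real
  assumes "1 \<le> \<bar>k\<bar>" and "0 \<le> m"
  shows "(1 + k\<^sup>2) powr (m/2) \<le> 2 powr (m/2) * \<bar>k\<bar> powr m"
proof -
  have "k\<^sup>2 = \<bar>k\<bar> powr 2" using assms(1) by (simp add: powr_numeral)
  then have "(k\<^sup>2) powr (m/2) = \<bar>k\<bar> powr (2 * (m/2))" by (simp only: powr_powr)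
  then have square_root: "(k\<^sup>2) powr (m/2) = \<bar>k\<bar> powr m" by simp
  have "1 \<le> k\<^sup>2" using assms(1) by (metis one_le_power power2_abs)
  then have "(1 + k\<^sup>2) powr (m/2) \<le> (2 * k\<^sup>2) powr (m/2)"
    using assms(2) by (intro powr_mono2) auto
  also have "\<dots> = 2 powr (m/2) * \<bar>k\<bar> powr m"
    by (simp add: powr_mult square_root)
  finally show ?thesis .
qed

lemma weight_le_high_frequency:
  fixes k m a \<rho> :: real
  assumes k: "1 \<le> \<bar>k\<bar>" and m: "0 \<le> m" and a: "0 < a" and \<rho>: "a * \<bar>k\<bar> powr m / 2 \<le> \<rho>"
  shows "(1 + k\<^sup>2) powr (m/2) \<le> 4 * 2 powr (m/2) / a\<^sup>2 * \<rho>\<^sup>2"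
proof -
  have "1 \<le> \<bar>k\<bar> powr m" using k m by (simp add: ge_one_powr_ge_zero)
  then have pow_le_sq: "\<bar>k\<bar> powr m \<le> (\<bar>k\<bar> powr m)\<^sup>2"
    using mult_left_mono[of 1 "\<bar>k\<bar> powr m" "\<bar>k\<bar> powr m"] by (simp add: power2_eq_square)
  have "(1 + k\<^sup>2) powr (m/2) \<le> 2 powr (m/2) * \<bar>k\<bar> powr m"
    using weight_le_power k m by simp
  also have "\<dots> \<le> 2 powr (m/2) * (\<bar>k\<bar> powr m)\<^sup>2"
    using pow_le_sq by (intro mult_left_mono) auto
  also have "\<dots> = 4 * 2 powr (m/2) / a\<^sup>2 * (a * \<bar>k\<bar> powr m / 2)\<^sup>2"
    using a by (simp add: field_simps power2_eq_square)
  also have "\<dots> \<le> 4 * 2 powr (m/2) / a\<^sup>2 * \<rho>\<^sup>2"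
    using \<rho> a by (intro mult_left_mono power_mono) auto
  finally show ?thesis .
qed

text \<open>The key symbol estimate: the Sobolev weight of order m is dominated by the squared modulus
  of the symbol, uniformly in 0 < lam < 1 and Re z \<le> c/2.  At low frequencies the margin is at
  least c/2; at high frequencies it is at least alpha/2, which grows like |k|^m.\<close>
lemma symbol_lower_bound:
  fixes \<alpha> :: "real \<Rightarrow> real" and a c m R :: real
  assumes c: "c > 0" and a: "a > 0" and m: "m \<ge> 1" and \<alpha>_nonneg: "\<And>k. \<alpha> k \<ge> 0"
    and growth: "\<And>k. \<bar>k\<bar> \<ge> R \<Longrightarrow> a * \<bar>k\<bar> powr m \<le> \<alpha> k"
  shows "\<exists>K>0. \<forall>lam z k. 0 < lam \<and> lam < 1 \<and> Re z \<le> c / 2 \<longrightarrow>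
           (1 + k\<^sup>2) powr (m/2) \<le> K * (cmod (resolvent_symbol \<alpha> c lam z k))\<^sup>2"
proof -
  define R1 where "R1 = max R (max 1 (1/c))"
  define K_low where "K_low = 4 * (1 + R1\<^sup>2) powr (m/2) / c\<^sup>2"
  define K_high where "K_high = 4 * 2 powr (m/2) / a\<^sup>2"
  have "0 < 1 + R1\<^sup>2" by (simp add: add_pos_nonneg)
  then have K_low: "K_low > 0" unfolding K_low_def using c by simp
  have K_high: "K_high > 0" unfolding K_high_def using a by simp
  have "(1 + k\<^sup>2) powr (m/2) \<le> (K_low + K_high) * (cmod (resolvent_symbol \<alpha> c lam z k))\<^sup>2"
    if lam: "0 < lam" "lam < 1" and z: "Re z \<le> c / 2" for lam z k
  proof -
    define \<rho> where "\<rho> = symbol_margin \<alpha> c lam k"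
    have \<rho>_ge: "c/2 \<le> \<rho>" unfolding \<rho>_def using symbol_margin_ge \<alpha>_nonneg by blast
    have "(1 + k\<^sup>2) powr (m/2) \<le> (K_low + K_high) * \<rho>\<^sup>2"
    proof (cases "\<bar>k\<bar> \<ge> R1")
      case True
      then have k1: "1 \<le> \<bar>k\<bar>" and kR: "R \<le> \<bar>k\<bar>" and kc: "1/c \<le> \<bar>k\<bar>" unfolding R1_def by auto
      have "1 \<le> \<bar>c * k\<bar>" using kc c by (simp add: field_simps abs_mult)
      moreover have "lam\<^sup>2 \<le> 1" using lam by (simp add: abs_square_le_1)
      ultimately have "a * \<bar>k\<bar> powr m / 2 \<le> \<rho>"
        using symbol_margin_high_frequency[of c lam k \<alpha>] growth[OF kR] c \<alpha>_nonneg[of k]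
        unfolding \<rho>_def by linarith
      then have "(1 + k\<^sup>2) powr (m/2) \<le> K_high * \<rho>\<^sup>2"
        unfolding K_high_def using weight_le_high_frequency k1 m a by simp
      then show ?thesis using K_low by (smt (verit) mult_right_mono zero_le_power2)
    next
      case False
      then have "k\<^sup>2 \<le> R1\<^sup>2" unfolding R1_def by (intro abs_le_square_iff[THEN iffD1]) auto
      then have "(1 + k\<^sup>2) powr (m/2) \<le> (1 + R1\<^sup>2) powr (m/2)" using m by (intro powr_mono2) auto
      also have "\<dots> = K_low * (c/2)\<^sup>2" unfolding K_low_def using c by (simp add: field_simps power2_eq_square)
      also have "\<dots> \<le> K_low * \<rho>\<^sup>2" using \<rho>_ge c K_low by (intro mult_left_mono power_mono) auto
      finally show ?thesis using K_high by (smt (verit) mult_right_mono zero_le_power2)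
    qed
    also have "\<dots> \<le> (K_low + K_high) * (cmod (resolvent_symbol \<alpha> c lam z k))\<^sup>2"
      using symbol_margin_le_norm[of z c \<alpha> k lam, OF z \<alpha>_nonneg[of k] c] K_low K_high unfolding \<rho>_def
      by (intro mult_left_mono) auto
    finally show ?thesis .
  qed
  then show ?thesis using K_low K_high by (intro exI[of _ "K_low + K_high"]) auto
qed

section \<open>The estimate on the Fourier side and the main theorem\<close>

text \<open>On the Fourier side the equation (A^lam - z) u = v becomes
  (c - z - T alpha) U = V - T P with P the transform of f'(u_c) u; the latter is in L2
  because f'(u_c) u = (f'(u_c) u - M u) + M u.\<close>
lemma A_eq_fourier_side:
  assumes eq: "A_eq \<alpha> f' uc c lam z u v" and v: "v \<in> L2" and hU: "has_fourier_L2 u U"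
  obtains V P where "has_fourier_L2 v V" and "has_fourier_L2 (\<lambda>x. complex_of_real (f' (uc x)) * u x) P"
    and "AE k in lborel. resolvent_symbol \<alpha> c lam z k * U k = V k - sym_T c lam k * P k"
proof -
  from eq obtain Mu Tw where hM: "multiplier_image (\<lambda>k. complex_of_real (\<alpha> k)) u Mu"
    and hT: "multiplier_image (sym_T c lam) (\<lambda>x. complex_of_real (f' (uc x)) * u x - Mu x) Tw"
    and eq_ae: "AE x in lborel. complex_of_real c * u x + Tw x - z * u x = v x"
    unfolding A_eq_def by blast
  from hM obtain U1 MU where hU1: "has_fourier_L2 u U1" and hMU: "has_fourier_L2 Mu MU"
    and MU_eq: "AE k in lborel. MU k = complex_of_real (\<alpha> k) * U1 k"
    unfolding multiplier_image_def by blast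
  from hT obtain Q TW where hQ: "has_fourier_L2 (\<lambda>x. complex_of_real (f' (uc x)) * u x - Mu x) Q"
    and hTW: "has_fourier_L2 Tw TW" and TW_eq: "AE k in lborel. TW k = sym_T c lam k * Q k"
    unfolding multiplier_image_def by blast
  have hV: "has_fourier_L2 v (\<lambda>k. (complex_of_real c - z) * U k + 1 * TW k)"
    by (rule has_fourier_L2_linear[OF hU hTW v]) (use eq_ae in \<open>eventually_elim, simp add: algebra_simps\<close>)
  have "(\<lambda>x. 1 * (complex_of_real (f' (uc x)) * u x - Mu x) + 1 * Mu x) \<in> L2"
    using has_fourier_L2_L2[OF hQ] has_fourier_L2_L2[OF hMU] by (intro L2_lin) auto
  then have hP: "has_fourier_L2 (\<lambda>x. complex_of_real (f' (uc x)) * u x) (\<lambda>k. 1 * Q k + 1 * MU k)"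
    by (intro has_fourier_L2_linear[OF hQ hMU]) simp_all
  have "AE k in lborel. resolvent_symbol \<alpha> c lam z k * U k
      = ((complex_of_real c - z) * U k + 1 * TW k) - sym_T c lam k * (1 * Q k + 1 * MU k)"
    using has_fourier_L2_unique[OF hU hU1] MU_eq TW_eq
    by eventually_elim (simp add: resolvent_symbol_def algebra_simps)
  with hV hP show ?thesis by (rule that)
qed

lemma weighted_energy_bound:
  fixes w :: "real \<Rightarrow> real" and \<sigma> T :: "real \<Rightarrow> complex"
  assumes hV: "has_fourier_L2 v V" and hP: "has_fourier_L2 p P"
    and K: "0 \<le> K" and weight: "\<And>k. w k \<le> K * (cmod (\<sigma> k))\<^sup>2" and T: "\<And>k. cmod (T k) \<le> 1"
    and eq: "AE k in lborel. \<sigma> k * U k = V k - T k * P k"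
  shows "(\<integral>\<^sup>+k. ennreal (w k * (cmod (U k))\<^sup>2) \<partial>lborel) \<le> ennreal (4 * K) * (energy v + energy p)"
proof -
  have [measurable]: "V \<in> borel_measurable borel" "P \<in> borel_measurable borel"
    using has_fourier_L2_L2[OF hV] has_fourier_L2_L2[OF hP] L2_meas by auto
  have pointwise: "AE k in lborel. ennreal (w k * (cmod (U k))\<^sup>2)
      \<le> ennreal (2 * K) * ennreal ((cmod (V k))\<^sup>2) + ennreal (2 * K) * ennreal ((cmod (P k))\<^sup>2)"
    using eq
  proof eventually_elim
    case (elim k)
    have "cmod (T k * P k) \<le> cmod (P k)"
      using mult_right_mono[OF T norm_ge_zero[of "P k"]] by (simp add: norm_mult)
    then have TP: "(cmod (- (T k * P k)))\<^sup>2 \<le> (cmod (P k))\<^sup>2" by (simp add: power_mono)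
    have "w k * (cmod (U k))\<^sup>2 \<le> K * (cmod (\<sigma> k))\<^sup>2 * (cmod (U k))\<^sup>2"
      by (intro mult_right_mono weight) simp
    also have "\<dots> = K * (cmod (V k + - (T k * P k)))\<^sup>2"
      using elim by (simp add: norm_mult power_mult_distrib flip: elim)
    also have "\<dots> \<le> K * (2 * (cmod (V k))\<^sup>2 + 2 * (cmod (P k))\<^sup>2)"
      using sq_norm_add_le[of "V k" "- (T k * P k)"] TP K by (intro mult_left_mono) linarith+
    finally show ?case
      using K by (simp add: algebra_simps ennreal_plus[symmetric] ennreal_mult[symmetric] del: ennreal_plus ennreal_mult)
  qed
  have "(\<integral>\<^sup>+k. ennreal (w k * (cmod (U k))\<^sup>2) \<partial>lborel)
      \<le> (\<integral>\<^sup>+k. ennreal (2 * K) * ennreal ((cmod (V k))\<^sup>2) + ennreal (2 * K) * ennreal ((cmod (P k))\<^sup>2) \<partial>lborel)"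
    by (rule nn_integral_mono_AE[OF pointwise])
  also have "\<dots> = ennreal (2 * K) * energy V + ennreal (2 * K) * energy P"
    by (subst nn_integral_add, measurable, subst nn_integral_cmult, measurable, subst nn_integral_cmult, measurable)
  also have "\<dots> \<le> ennreal (2 * K) * (2 * energy v) + ennreal (2 * K) * (2 * energy p)"
    by (intro add_mono mult_left_mono has_fourier_L2_energy hV hP) auto
  also have "\<dots> = ennreal (4 * K) * (energy v + energy p)"
  proof -
    have "ennreal (2 * K) * 2 = ennreal (4 * K)" using K ennreal_mult[of "2 * K" 2] by simp
    then show ?thesis by (simp add: distrib_left mult.assoc[symmetric])
  qed
  finally show ?thesis .
qed

lemma sqrt_enn2real_bound:
  fixes A B1 B2 :: ennreal
  assumes "A \<le> ennreal C * (B1 + B2)" "B1 < top" "B2 < top" "0 \<le> C"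
  shows "sqrt (enn2real A) \<le> sqrt C * (sqrt (enn2real B1) + sqrt (enn2real B2))"
proof -
  have "enn2real A \<le> enn2real (ennreal C * (B1 + B2))"
    using assms by (intro enn2real_mono) (auto simp: ennreal_mult_less_top)
  also have "\<dots> = C * (enn2real B1 + enn2real B2)"
    using assms by (simp add: enn2real_mult enn2real_plus)
  finally have "sqrt (enn2real A) \<le> sqrt C * sqrt (enn2real B1 + enn2real B2)"
    using assms(4) by (simp add: real_sqrt_mult[symmetric])
  also have "\<dots> \<le> sqrt C * (sqrt (enn2real B1) + sqrt (enn2real B2))"
    using assms(4) by (intro mult_left_mono sqrt_add_le_add_sqrt) auto
  finally show ?thesis .
qed

text \<open>The main theorem, with lam0 = 1 and C = sqrt (4 K).\<close>
theorem mainTheorem17: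
  fixes f f' :: "real \<Rightarrow> real" and \<alpha> :: "real \<Rightarrow> real" and m a b c :: real
    and uc :: "real \<Rightarrow> real"
  assumes f_deriv: "\<And>x. (f has_real_derivative f' x) (at x)"
    and f'_cont: "continuous_on UNIV f'"
    and f0: "f 0 = 0" and f'0: "f' 0 = 0"
    and \<alpha>_meas: "\<alpha> \<in> borel_measurable borel"
    and \<alpha>_nonneg: "\<And>k. \<alpha> k \<ge> 0"
    and \<alpha>_locbdd: "\<And>K. compact K \<Longrightarrow> bounded (\<alpha> ` K)"
    and m_ge: "m \<ge> 1" and a_pos: "a > 0" and b_pos: "b > 0"
    and \<alpha>_growth: "\<exists>R. \<forall>k. \<bar>k\<bar> \<ge> R \<longrightarrow> a * \<bar>k\<bar> powr m \<le> \<alpha> k \<and> \<alpha> k \<le> b * \<bar>k\<bar> powr m"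
    and c_pos: "c > 0"
    and uc_H: "(\<lambda>x. complex_of_real (uc x)) \<in> Hs m"
    and uc_eq: "\<exists>Muc. multiplier_image (\<lambda>k. complex_of_real (\<alpha> k)) (\<lambda>x. complex_of_real (uc x)) Muc \<and>
                  (AE x in lborel. Muc x + complex_of_real (c * uc x) - complex_of_real (f (uc x)) = 0)"
    and uc_top: "(uc \<longlongrightarrow> 0) at_top" and uc_bot: "(uc \<longlongrightarrow> 0) at_bot"
  shows "\<exists>lam0 > 0. \<exists>C > 0. \<forall>lam z v u.
           0 < lam \<and> lam < lam0 \<and> Re z \<le> c / 2 \<and> v \<in> L2 \<and> u \<in> Hs m \<and>
           A_eq \<alpha> f' uc c lam z u v \<longrightarrow>
           Hnorm (m / 2) u \<le> C * (L2wnorm (\<lambda>x. (f' (uc x))\<^sup>2) u + L2norm v)"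
proof -
  obtain R where growth: "\<And>k. \<bar>k\<bar> \<ge> R \<Longrightarrow> a * \<bar>k\<bar> powr m \<le> \<alpha> k"
    using \<alpha>_growth by blast
  obtain K where K: "K > 0" and symbol_bound: "\<And>lam z k. 0 < lam \<and> lam < 1 \<and> Re z \<le> c / 2 \<Longrightarrow>
      (1 + k\<^sup>2) powr (m/2) \<le> K * (cmod (resolvent_symbol \<alpha> c lam z k))\<^sup>2"
    using symbol_lower_bound[OF c_pos a_pos m_ge \<alpha>_nonneg growth] by blast
  have "Hnorm (m / 2) u \<le> sqrt (4 * K) * (L2wnorm (\<lambda>x. (f' (uc x))\<^sup>2) u + L2norm v)"
    if lam: "0 < lam" "lam < 1" and z: "Re z \<le> c / 2" and v: "v \<in> L2" and u: "u \<in> Hs m"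
      and eq: "A_eq \<alpha> f' uc c lam z u v" for lam z v u
  proof -
    define p where "p = (\<lambda>x. complex_of_real (f' (uc x)) * u x)"
    obtain V P where hV: "has_fourier_L2 v V" and hP: "has_fourier_L2 p P"
      and fourier_eq: "AE k in lborel. resolvent_symbol \<alpha> c lam z k * fourier_L2 u k = V k - sym_T c lam k * P k"
      using A_eq_fourier_side[OF eq v has_fourier_L2_fourier_L2[OF u]] unfolding p_def by blast
    have "(\<integral>\<^sup>+k. ennreal ((1 + k\<^sup>2) powr (m/2) * (cmod (fourier_L2 u k))\<^sup>2) \<partial>lborel) \<le> ennreal (4 * K) * (energy v + energy p)"
      using symbol_bound lam z norm_sym_T_le[OF lam(1)] K
      by (intro weighted_energy_bound[OF hV hP _ _ _ fourier_eq]) auto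
    then have "sqrt (enn2real (\<integral>\<^sup>+k. ennreal ((1 + k\<^sup>2) powr (m/2) * (cmod (fourier_L2 u k))\<^sup>2) \<partial>lborel))
        \<le> sqrt (4 * K) * (sqrt (enn2real (energy v)) + sqrt (enn2real (energy p)))"
      using L2_fin[OF v] L2_fin has_fourier_L2_L2[OF hP] K by (intro sqrt_enn2real_bound) auto
    then show ?thesis
      unfolding Hnorm_def L2norm_def L2wnorm_square_weight[of "\<lambda>x. f' (uc x)"] p_def by (simp add: add.commute)
  qed
  moreover have "sqrt (4 * K) > 0" using K by simp
  ultimately show ?thesis using zero_less_one by blast
qed

end
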